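(* For all $x\in\mathbb{C}$ and all integers $m$ and $n$ with $n\ge0$, \[ \sum_{k=0}^n x^k\big(F_mL_{mk}+(xL_m-2)F_{m(k+1)}\big)=x^{n+1}L_mF_{m(n+1)} \] and \[ \sum_{k=0}^n x^k\big(5F_mF_{mk}+(xL_m-2)L_{m(k+1)}\big)=L_m\big(x^{n+1}L_{m(n+1)}-2\big). \]
   Context: $F_n$ and $L_n$ are the Fibonacci and Lucas numbers: $F_0=0$, $F_1=1$, $L_0=2$, $L_1=1$, $W_n=W_{n-1}+W_{n-2}$, extended to negative indices by $F_{-n}=(-1)^{n-1}F_n$ and $L_{-n}=(-1)^nL_n$. *)

theory Defs
  imports Complex_Main
begin

fun fibn :: "nat \<Rightarrow> int" where
  "fibn 0 = 0"
| "fibn (Suc 0) = 1"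
| "fibn (Suc (Suc n)) = fibn (Suc n) + fibn n"

fun lucn :: "nat \<Rightarrow> int" where
  "lucn 0 = 2"
| "lucn (Suc 0) = 1"
| "lucn (Suc (Suc n)) = lucn (Suc n) + lucn n"

definition Fib :: "int \<Rightarrow> int" where
  "Fib n = (if n \<ge> 0 then fibn (nat n) else (-1) ^ (nat (-n) + 1) * fibn (nat (-n)))"

definition Luc :: "int \<Rightarrow> int" where
  "Luc n = (if n \<ge> 0 then lucn (nat n) else (-1) ^ nat (-n) * lucn (nat (-n)))"

end

theory Submission
  imports Defs
begin

text \<open>
  By the addition formulas 2 F(a + b) = F(a) L(b) + F(b) L(a) and
  2 L(a + b) = L(a) L(b) + 5 F(a) F(b), applied with a = mk and b = m, the k-th summands are
  the differences T(k + 1) - T(k) of T(k) = x^k L(m) F(mk) and of T(k) = x^k L(m) L(mk)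
  respectively, so both sums telescope. The addition formulas hold for all integers a, since
  both sides satisfy the Fibonacci recurrence in a, which can be run forwards and backwards.
\<close>

lemma int_two_step_induct:
  fixes P :: "int \<Rightarrow> bool"
  assumes "P 0" "P 1"
    and up: "\<And>n. P n \<Longrightarrow> P (n + 1) \<Longrightarrow> P (n + 2)"
    and down: "\<And>n. P (n + 1) \<Longrightarrow> P (n + 2) \<Longrightarrow> P n"
  shows "P n"
proof -
  have nonneg: "P (int k) \<and> P (int k + 1)" for k
  proof (induction k)
    case 0
    then show ?case using assms by simp
  next
    case (Suc k)
    then have "P (int k + 2)" using up by blast
    moreover have "int (Suc k) = int k + 1" "int (Suc k) + 1 = int k + 2" by simp_all
    ultimately show ?case using Suc by metis
  qed
  have nonpos: "P (- int k) \<and> P (1 - int k)" for k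
  proof (induction k)
    case 0
    then show ?case using assms by simp
  next
    case (Suc k)
    then have "P (- int k - 1)" using down[of "- int k - 1"] by (simp add: algebra_simps)
    moreover have "- int (Suc k) = - int k - 1" "1 - int (Suc k) = - int k" by simp_all
    ultimately show ?case using Suc by metis
  qed
  show ?thesis
    using nonneg[of "nat n"] nonpos[of "nat (- n)"] by (cases "n \<ge> 0") simp_all
qed

lemma Fib_neg: "Fib (- int j) = (-1) ^ (j + 1) * fibn j"
  by (cases j) (auto simp: Fib_def simp flip: of_nat_Suc)

lemma Luc_neg: "Luc (- int j) = (-1) ^ j * lucn j"
  by (cases j) (auto simp: Luc_def simp flip: of_nat_Suc)

lemma Fib_rec: "Fib (n + 2) = Fib (n + 1) + Fib n"
proof (cases "n \<ge> -1")
  case True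
  then consider "n = -1" | "n \<ge> 0" by linarith
  then show ?thesis
    by cases (simp_all add: Fib_def nat_add_distrib)
next
  case False
  define k where "k = nat (- n - 2)"
  with False have "n + 2 = - int k" "n + 1 = - int (Suc k)" "n = - int (Suc (Suc k))"
    by auto
  then show ?thesis by (simp only: Fib_neg) (simp add: algebra_simps)
qed

lemma Luc_rec: "Luc (n + 2) = Luc (n + 1) + Luc n"
proof (cases "n \<ge> -1")
  case True
  then consider "n = -1" | "n \<ge> 0" by linarith
  then show ?thesis
    by cases (simp_all add: Luc_def nat_add_distrib)
next
  case False
  define k where "k = nat (- n - 2)"
  with False have "n + 2 = - int k" "n + 1 = - int (Suc k)" "n = - int (Suc (Suc k))"
    by auto
  then show ?thesis by (simp only: Luc_neg) (simp add: algebra_simps)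
qed

lemma Luc_conv_Fib: "Luc n = 2 * Fib (n + 1) - Fib n"
proof (induction n rule: int_two_step_induct)
  case (3 n)
  then show ?case using Luc_rec[of n] Fib_rec[of n] Fib_rec[of "n + 1"]
    by (simp add: algebra_simps)
next
  case (4 n)
  then show ?case using Luc_rec[of n] Fib_rec[of n] Fib_rec[of "n + 1"]
    by (simp add: algebra_simps)
qed (simp_all add: Luc_def Fib_def numeral_2_eq_2)

lemma Fib_add: "2 * Fib (a + b) = Fib a * Luc b + Fib b * Luc a"
proof (induction a rule: int_two_step_induct)
  case 2
  show ?case using Luc_conv_Fib[of b] by (simp add: Luc_def Fib_def add.commute)
next
  case (3 n)
  then show ?case using Luc_rec[of n] Fib_rec[of n] Fib_rec[of "n + b"]
    by (simp add: algebra_simps)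
next
  case (4 n)
  then show ?case using Luc_rec[of n] Fib_rec[of n] Fib_rec[of "n + b"]
    by (simp add: algebra_simps)
qed (simp add: Luc_def Fib_def)

lemma Luc_add: "2 * Luc (a + b) = Luc a * Luc b + 5 * Fib a * Fib b"
proof (induction a rule: int_two_step_induct)
  case 2
  show ?case using Luc_conv_Fib[of b] Luc_conv_Fib[of "b + 1"] Fib_rec[of b]
    by (simp add: Luc_def Fib_def algebra_simps)
next
  case (3 n)
  then show ?case using Luc_rec[of n] Fib_rec[of n] Luc_rec[of "n + b"]
    by (simp add: algebra_simps)
next
  case (4 n)
  then show ?case using Luc_rec[of n] Fib_rec[of n] Luc_rec[of "n + b"]
    by (simp add: algebra_simps)
qed (simp add: Luc_def Fib_def)

lemma telescoping_sum_Fib: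
  fixes x :: "'a::comm_ring_1"
  shows "(\<Sum>k=0..n. x ^ k * (of_int (Fib m * Luc (m * int k))
            + (x * of_int (Luc m) - 2) * of_int (Fib (m * (int k + 1)))))
         = x ^ (n + 1) * of_int (Luc m) * of_int (Fib (m * (int n + 1)))"
proof -
  define T where "T k = x ^ k * of_int (Luc m) * of_int (Fib (m * int k))" for k
  have "x ^ k * (of_int (Fib m * Luc (m * int k))
          + (x * of_int (Luc m) - 2) * of_int (Fib (m * (int k + 1)))) = T (Suc k) - T k" for k
  proof -
    have "2 * Fib (m * (int k + 1)) = Fib (m * int k) * Luc m + Fib m * Luc (m * int k)"
      using Fib_add[of "m * int k" m] by (simp add: algebra_simps)
    then have "(2 :: 'a) * of_int (Fib (m * (int k + 1)))
        = of_int (Fib (m * int k)) * of_int (Luc m) + of_int (Fib m) * of_int (Luc (m * int k))"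
      by (metis (mono_tags) of_int_add of_int_mult of_int_numeral)
    then show ?thesis
      by (simp add: T_def algebra_simps)
  qed
  then have "(\<Sum>k=0..n. x ^ k * (of_int (Fib m * Luc (m * int k))
              + (x * of_int (Luc m) - 2) * of_int (Fib (m * (int k + 1))))) = T (Suc n) - T 0"
    by (simp add: sum_Suc_diff)
  then show ?thesis
    by (simp add: T_def Fib_def algebra_simps)
qed

lemma telescoping_sum_Luc:
  fixes x :: "'a::comm_ring_1"
  shows "(\<Sum>k=0..n. x ^ k * (5 * of_int (Fib m * Fib (m * int k))
            + (x * of_int (Luc m) - 2) * of_int (Luc (m * (int k + 1)))))
         = of_int (Luc m) * (x ^ (n + 1) * of_int (Luc (m * (int n + 1))) - 2)"
proof -
  define T where "T k = x ^ k * of_int (Luc m) * of_int (Luc (m * int k))" for k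
  have "x ^ k * (5 * of_int (Fib m * Fib (m * int k))
          + (x * of_int (Luc m) - 2) * of_int (Luc (m * (int k + 1)))) = T (Suc k) - T k" for k
  proof -
    have "2 * Luc (m * (int k + 1)) = Luc (m * int k) * Luc m + 5 * Fib (m * int k) * Fib m"
      using Luc_add[of "m * int k" m] by (simp add: algebra_simps)
    then have "(2 :: 'a) * of_int (Luc (m * (int k + 1)))
        = of_int (Luc (m * int k)) * of_int (Luc m) + 5 * of_int (Fib (m * int k)) * of_int (Fib m)"
      by (metis (mono_tags) of_int_add of_int_mult of_int_numeral)
    then show ?thesis
      by (simp add: T_def algebra_simps)
  qed
  then have "(\<Sum>k=0..n. x ^ k * (5 * of_int (Fib m * Fib (m * int k))
              + (x * of_int (Luc m) - 2) * of_int (Luc (m * (int k + 1))))) = T (Suc n) - T 0"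
    by (simp add: sum_Suc_diff)
  then show ?thesis
    by (simp add: T_def Luc_def algebra_simps)
qed

theorem proposition2:
  fixes x :: complex and m :: int and n :: nat
  shows "((\<Sum>k=0..n. x ^ k * (of_int (Fib m * Luc (m * int k))
            + (x * of_int (Luc m) - 2) * of_int (Fib (m * (int k + 1)))))
         = x ^ (n + 1) * of_int (Luc m) * of_int (Fib (m * (int n + 1))))
    \<and> ((\<Sum>k=0..n. x ^ k * (5 * of_int (Fib m * Fib (m * int k))
            + (x * of_int (Luc m) - 2) * of_int (Luc (m * (int k + 1)))))
         = of_int (Luc m) * (x ^ (n + 1) * of_int (Luc (m * (int n + 1))) - 2))"
  using telescoping_sum_Fib telescoping_sum_Luc by blast

end
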